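(* Assume $X=\{0,1\}^n$, $R(X)=[0,1]^n$, $Q'$ is monotone submodular on $X$ (viewed as a set function on $2^{[n]}$ via indicator vectors), and its extension $Q:[0,1]^n\to\mathbb{R}$ is component-wise monotonically nondecreasing on $[0,1]^n$. Then for every $\hat{\mathbf{x}}\in[0,1]^n$, the set function $I\mapsto g_{\hat{\mathbf{x}}}^Q(I)$ on $2^{[n]}$ is monotone submodular.
   Context: $Q(\mathbf{x})=Q'(\mathbf{x})$ for $\mathbf{x}\in\{0,1\}^n$. A set function $f:2^{[n]}\to\mathbb{R}$ is monotone submodular if $f(S)\le f(T)$ whenever $S\subseteq T\subseteq[n]$, and $f(S\cup\{j\})+f(S\cup\{k\})\geq f(S\cup\{j,k\})+f(S)$ for all $S\subseteq[n]$ and distinct $j,k\in[n]\setminus S$. A function of binary variables is identified with a set function via $f(A)=f(\chi_A)$, $\chi_A$ the indicator vector of $A$. For $I\subseteq[n]$ and $\chi\in\{0,1\}^I$, $\nu_I^Q(\chi):=\min\{Q(\mathbf{x}):\mathbf{x}\in[0,1]^n,\ \mathbf{x}_I=\chi\}$, where $\mathbf{x}_I$ is the subvector indexed by $I$. The cut violation function is $$g_{\hat{\mathbf{x}}}^Q(I)=\max_{\mu\in\mathbb{R}^I,\eta\in\mathbb{R}}\Big\{\sum_{i\in I}\mu_i\hat{x}_i+\eta:\ \sum_{i\in I}\mu_i\chi_i+\eta\leq \nu_I^Q(\chi)\ \ \forall \chi\in\{0,1\}^I\Big\}.$$ *)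

theory Defs
  imports Complex_Main
begin

text \<open>Ground set [n] is modelled by a finite type 'n (so n = CARD('n)); a vector in
  R^n is a function 'n \<Rightarrow> real.\<close>

definition unit_box :: "('n \<Rightarrow> real) set" where
  "unit_box = {x. \<forall>i. 0 \<le> x i \<and> x i \<le> 1}"

definition binary_vecs :: "('n \<Rightarrow> real) set" where
  "binary_vecs = {x. \<forall>i. x i = 0 \<or> x i = 1}"

definition chi :: "'n set \<Rightarrow> 'n \<Rightarrow> real" where
  "chi A = (\<lambda>i. if i \<in> A then 1 else 0)"

definition monotone_submodular :: "('n set \<Rightarrow> real) \<Rightarrow> bool" where
  "monotone_submodular f \<longleftrightarrow>
     (\<forall>S T. S \<subseteq> T \<longrightarrow> f S \<le> f T) \<and>
     (\<forall>S j k. j \<notin> S \<and> k \<notin> S \<and> j \<noteq> k \<longrightarrow>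
        f (insert j S) + f (insert k S) \<ge> f (insert j (insert k S)) + f S)"

text \<open>Binary vectors indexed by I, i.e. elements of {0,1}^I, represented as functions
  which vanish outside I.\<close>
definition binary_on :: "'n set \<Rightarrow> ('n \<Rightarrow> real) set" where
  "binary_on I = {c. (\<forall>i\<in>I. c i = 0 \<or> c i = 1) \<and> (\<forall>i. i \<notin> I \<longrightarrow> c i = 0)}"

definition nu :: "(('n \<Rightarrow> real) \<Rightarrow> real) \<Rightarrow> 'n set \<Rightarrow> ('n \<Rightarrow> real) \<Rightarrow> real" where
  "nu Q I c = Inf {Q x | x. x \<in> unit_box \<and> (\<forall>i\<in>I. x i = c i)}"

text \<open>Cut violation function g_xhat^Q(I) (the LP optimum, written as a supremum).\<close>
definition cut_violation :: "(('n \<Rightarrow> real) \<Rightarrow> real) \<Rightarrow> ('n \<Rightarrow> real) \<Rightarrow> 'n set \<Rightarrow> real" where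
  "cut_violation Q xhat I = Sup {(\<Sum>i\<in>I. \<mu> i * xhat i) + \<eta> | \<mu> \<eta>.
      \<forall>c\<in>binary_on I. (\<Sum>i\<in>I. \<mu> i * c i) + \<eta> \<le> nu Q I c}"

end

theory Submission
  imports Defs
begin

text \<open>Since Q is monotone, the minimum defining nu is attained at the indicator vector itself, so
  g(I) is the value at xhat of the convex closure of f(C) = Q(chi C) on the subsets C of I. Writing
  xhat as a nonnegative combination of indicators of its upper level sets, the greedy algorithm
  (adding coordinates in decreasing order of xhat) shows that for submodular f this convex closure
  is the Lovasz extension, i.e. the corresponding combination of the values f(I \<inter> T) on these level
  sets T. Each I \<mapsto> f(I \<inter> T) is monotone submodular, and so is their nonnegative combination.\<close>

definition submodular :: "('a set \<Rightarrow> real) \<Rightarrow> bool" where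
  "submodular f \<longleftrightarrow> (\<forall>S j k. j \<notin> S \<longrightarrow> k \<notin> S \<longrightarrow> j \<noteq> k \<longrightarrow>
     f (insert j (insert k S)) + f S \<le> f (insert j S) + f (insert k S))"

lemma submodularD:
  "submodular f \<Longrightarrow> j \<notin> S \<Longrightarrow> k \<notin> S \<Longrightarrow> j \<noteq> k \<Longrightarrow>
     f (insert j (insert k S)) + f S \<le> f (insert j S) + f (insert k S)"
  unfolding submodular_def by blast

lemma monotone_submodular_iff: "monotone_submodular f \<longleftrightarrow> mono f \<and> submodular f"
  unfolding monotone_submodular_def submodular_def mono_def by auto

definition convex_closure :: "('a set \<Rightarrow> real) \<Rightarrow> 'a set \<Rightarrow> ('a \<Rightarrow> real) \<Rightarrow> real" where
  "convex_closure f I x = Sup {(\<Sum>i\<in>I. \<mu> i * x i) + \<eta> | \<mu> \<eta>.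
      \<forall>C\<subseteq>I. (\<Sum>i\<in>I. \<mu> i * chi C i) + \<eta> \<le> f C}"

text \<open>The Lovasz extension of f on I at the point x = \<Sum>k<m. l k * chi (T k), which lies in the
  unit cube when the weights are nonnegative with sum at most 1.\<close>
definition layer_sum :: "('a set \<Rightarrow> real) \<Rightarrow> (nat \<Rightarrow> real) \<Rightarrow> (nat \<Rightarrow> 'a set) \<Rightarrow> nat \<Rightarrow> 'a set \<Rightarrow> real"
  where "layer_sum f l T m I = (1 - (\<Sum>k<m. l k)) * f {} + (\<Sum>k<m. l k * f (I \<inter> T k))"

lemma submodular_diminishing_returns:
  assumes "submodular f" "finite B" "A \<subseteq> B" "p \<notin> B"
  shows "f (insert p B) + f A \<le> f (insert p A) + f B"
proof -
  have "f (insert p (A \<union> D)) + f A \<le> f (insert p A) + f (A \<union> D)"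
    if "finite D" "p \<notin> A" "p \<notin> D" "D \<inter> A = {}" for D A
    using that
  proof (induction D arbitrary: A rule: finite_induct)
    case (insert d D)
    have "f (insert p (insert d A \<union> D)) + f (insert d A) \<le> f (insert p (insert d A)) + f (insert d A \<union> D)"
      using insert by (intro insert.IH) auto
    moreover have "f (insert p (insert d A)) + f A \<le> f (insert p A) + f (insert d A)"
      using submodularD[OF \<open>submodular f\<close>, of p A d] insert.prems by auto
    moreover have "insert d A \<union> D = A \<union> insert d D" by blast
    ultimately show ?case by simp
  qed simp
  moreover have "A \<union> (B - A) = B" using \<open>A \<subseteq> B\<close> by blast
  ultimately show ?thesis using assms by (metis Diff_iff finite_Diff Diff_disjoint Int_commute subsetD)
qed

lemma submodular_restrict:
  assumes "submodular f"
  shows "submodular (\<lambda>S. f (S \<inter> T))"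
  unfolding submodular_def
proof (intro allI impI)
  fix S :: "'a set" and j k assume "j \<notin> S" "k \<notin> S" "j \<noteq> k"
  then show "f (insert j (insert k S) \<inter> T) + f (S \<inter> T) \<le> f (insert j S \<inter> T) + f (insert k S \<inter> T)"
    using submodularD[OF assms, of j "S \<inter> T" k]
    by (cases "j \<in> T"; cases "k \<in> T") (simp_all add: Int_insert_left)
qed

lemma monotone_submodular_layer_sum:
  assumes "monotone_submodular f" "\<forall>k<m. 0 \<le> l k"
  shows "monotone_submodular (layer_sum f l T m)"
  unfolding monotone_submodular_iff
proof
  have "f (S \<inter> T k) \<le> f (S' \<inter> T k)" if "S \<subseteq> S'" for S S' k
    using assms(1) that by (auto simp: monotone_submodular_iff mono_def intro: Int_mono)
  then show "mono (layer_sum f l T m)"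
    using assms(2) by (auto simp: mono_def layer_sum_def intro!: sum_mono mult_left_mono)
next
  have "submodular (\<lambda>S. f (S \<inter> T k))" for k
    using assms(1) by (simp add: monotone_submodular_iff submodular_restrict)
  then show "submodular (layer_sum f l T m)"
    using assms(2) unfolding submodular_def layer_sum_def
    by (auto simp flip: sum.distrib distrib_left intro!: sum_mono mult_left_mono)
qed

lemma threshold_decomposition:
  fixes V :: "real set"
  assumes "finite V" "\<forall>x\<in>V. 0 \<le> x"
  shows "\<exists>(m::nat) l v. (\<forall>k<m. 0 \<le> l k \<and> v k \<in> V) \<and> (\<Sum>k<m. l k) = Max (insert 0 V)
     \<and> (\<forall>x\<in>V. (\<Sum>k<m. if v k \<le> x then l k else 0) = x)"
  using assms
proof (induction V rule: finite_linorder_max_induct)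
  case empty
  show ?case by (auto intro!: exI[where x="0::nat"])
next
  case (insert b A)
  then obtain m :: nat and l v where lv: "\<forall>k<m. 0 \<le> l k \<and> v k \<in> A" "(\<Sum>k<m. l k) = Max (insert 0 A)"
     "\<forall>x\<in>A. (\<Sum>k<m. if v k \<le> x then l k else 0) = x" by auto
  define M where "M = Max (insert 0 A)"
  have "M \<in> insert 0 A" unfolding M_def by (rule Max_in) (use insert in auto)
  then have "M \<le> b" using insert by auto
  have "Max (insert 0 (insert b A)) = b"
    by (rule Max_eqI) (use insert in auto)
  \<comment> \<open>add the new top level b, of height b - M, above all previous thresholds\<close>
  moreover have "(\<Sum>k<Suc m. (l(m := b - M)) k) = (\<Sum>k<m. l k) + (b - M)"
    by simp
  moreover have "(\<Sum>k<m. if (v(m := b)) k \<le> x then (l(m := b - M)) k else 0)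
      = (if x = b then \<Sum>k<m. l k else \<Sum>k<m. if v k \<le> x then l k else 0)" if "x \<in> insert b A" for x
    using that lv(1) insert.hyps by (fastforce intro!: sum.cong)
  ultimately show ?case
    using lv \<open>M \<le> b\<close> insert.hyps
    by (intro exI[of _ "Suc m"] exI[of _ "l(m := b - M)"] exI[of _ "v(m := b)"])
      (auto simp: M_def less_Suc_eq)
qed

lemma affine_minorant_le_layer_sum:
  assumes "finite I" and l: "\<forall>k<m. 0 \<le> l k" "(\<Sum>k<m. l k) \<le> 1"
    and x: "\<forall>i\<in>I. (\<Sum>k<m. if i \<in> T k then l k else 0) = x i"
    and minorant: "\<forall>C\<subseteq>I. (\<Sum>i\<in>I. \<mu> i * chi C i) + \<eta> \<le> f C"
  shows "(\<Sum>i\<in>I. \<mu> i * x i) + \<eta> \<le> layer_sum f l T m I"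
proof -
  define a where "a k = (\<Sum>i\<in>I. \<mu> i * chi (I \<inter> T k) i)" for k
  have "x i = (\<Sum>k<m. if i \<in> T k then l k else 0)" if "i \<in> I" for i
    using x that by simp
  then have "(\<Sum>i\<in>I. \<mu> i * x i) = (\<Sum>i\<in>I. \<Sum>k<m. l k * (\<mu> i * chi (I \<inter> T k) i))"
    by (auto simp: sum_distrib_left chi_def intro!: sum.cong)
  also have "\<dots> = (\<Sum>k<m. l k * a k)"
    by (subst sum.swap) (simp add: a_def sum_distrib_left)
  finally have "(\<Sum>i\<in>I. \<mu> i * x i) + \<eta> = (1 - (\<Sum>k<m. l k)) * \<eta> + (\<Sum>k<m. l k * (a k + \<eta>))"
    by (simp add: algebra_simps sum.distrib sum_distrib_left)
  also have "\<dots> \<le> layer_sum f l T m I"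
    unfolding layer_sum_def
  proof (intro add_mono mult_left_mono sum_mono)
    show "\<eta> \<le> f {}" using minorant[rule_format, of "{}"] by (simp add: chi_def)
    show "a k + \<eta> \<le> f (I \<inter> T k)" for k using minorant unfolding a_def by blast
  qed (use l in auto)
  finally show ?thesis .
qed

text \<open>Greedy construction: removing a coordinate p of minimal value from I, the slope
  f I - f (I - {p}) keeps the minorant below f by diminishing returns, and lifts its value at x by
  exactly the contribution of p to the layer sum, since the level sets containing p contain I.\<close>
lemma greedy_affine_minorant:
  assumes "submodular f" "finite I"
    and x: "\<forall>i\<in>I. (\<Sum>k<m. if v k \<le> x i then l k else 0) = x i"
  shows "\<exists>\<mu> \<eta>. (\<forall>C\<subseteq>I. (\<Sum>i\<in>I. \<mu> i * chi C i) + \<eta> \<le> f C)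
     \<and> (\<Sum>i\<in>I. \<mu> i * x i) + \<eta> = layer_sum f l (\<lambda>k. {i. v k \<le> x i}) m I"
  using \<open>finite I\<close> x
proof (induction I rule: finite_ranking_induct[where f = "\<lambda>i. - x i"])
  case empty
  have "layer_sum f l T m {} = f {}" for T
    by (simp add: layer_sum_def algebra_simps sum_distrib_left)
  then show ?case by (intro exI[of _ "\<lambda>_. 0"] exI[of _ "f {}"]) auto
next
  case (insert p I')
  show ?case
  proof (cases "p \<in> I'")
    case True
    then show ?thesis using insert.IH insert.prems by (simp only: insert_absorb)
  next
    case False
    let ?I = "insert p I'" and ?T = "\<lambda>k. {i. v k \<le> x i}"
    obtain \<mu>' \<eta> where IH: "\<forall>C\<subseteq>I'. (\<Sum>i\<in>I'. \<mu>' i * chi C i) + \<eta> \<le> f C"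
        "(\<Sum>i\<in>I'. \<mu>' i * x i) + \<eta> = layer_sum f l ?T m I'"
      using insert.IH insert.prems by blast
    define \<mu> where "\<mu> = \<mu>'(p := f ?I - f I')"
    have split: "(\<Sum>i\<in>?I. \<mu> i * c i) = (\<Sum>i\<in>I'. \<mu>' i * c i) + (f ?I - f I') * c p" for c
      using False insert.hyps by (auto simp: \<mu>_def intro!: sum.cong)
    have "\<forall>C\<subseteq>?I. (\<Sum>i\<in>?I. \<mu> i * chi C i) + \<eta> \<le> f C"
    proof (intro allI impI)
      fix C assume "C \<subseteq> ?I"
      have "C - {p} \<subseteq> I'" using \<open>C \<subseteq> ?I\<close> by auto
      moreover have "(\<Sum>i\<in>I'. \<mu>' i * chi C i) = (\<Sum>i\<in>I'. \<mu>' i * chi (C - {p}) i)"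
        using False by (auto simp: chi_def intro!: sum.cong)
      ultimately have ih: "(\<Sum>i\<in>I'. \<mu>' i * chi C i) + \<eta> \<le> f (C - {p})"
        using IH(1) by auto
      show "(\<Sum>i\<in>?I. \<mu> i * chi C i) + \<eta> \<le> f C"
      proof (cases "p \<in> C")
        case True
        have "f ?I + f (C - {p}) \<le> f (insert p (C - {p})) + f I'"
          using submodular_diminishing_returns[OF \<open>submodular f\<close>] \<open>C - {p} \<subseteq> I'\<close> False insert.hyps
          by blast
        with True ih show ?thesis by (simp add: split insert_absorb chi_def)
      next
        case False
        with ih show ?thesis by (simp add: split chi_def)
      qed
    qed
    moreover have "l k * f (?I \<inter> ?T k) = l k * f (I' \<inter> ?T k) + (if v k \<le> x p then l k else 0) * (f ?I - f I')" for k
    proof (cases "v k \<le> x p")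
      case True
      then have "?I \<inter> ?T k = ?I" "I' \<inter> ?T k = I'" using insert.hyps(2) by force+
      with True show ?thesis by (simp add: algebra_simps)
    next
      case False
      then have "?I \<inter> ?T k = I' \<inter> ?T k" by auto
      with False show ?thesis by simp
    qed
    moreover have "(\<Sum>k<m. if v k \<le> x p then l k else 0) = x p"
      using insert.prems by simp
    ultimately have "layer_sum f l ?T m ?I = layer_sum f l ?T m I' + x p * (f ?I - f I')"
      by (simp add: layer_sum_def sum.distrib flip: sum_distrib_right)
    with IH(2) have "(\<Sum>i\<in>?I. \<mu> i * x i) + \<eta> = layer_sum f l ?T m ?I"
      by (simp add: split algebra_simps)
    with \<open>\<forall>C\<subseteq>?I. (\<Sum>i\<in>?I. \<mu> i * chi C i) + \<eta> \<le> f C\<close> show ?thesis by blast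
  qed
qed

lemma convex_closure_eq_layer_sum:
  assumes "submodular f" "finite I" "\<forall>k<m. 0 \<le> l k" "(\<Sum>k<m. l k) \<le> 1"
    and x: "\<forall>i\<in>I. (\<Sum>k<m. if v k \<le> x i then l k else 0) = x i"
  shows "convex_closure f I x = layer_sum f l (\<lambda>k. {i. v k \<le> x i}) m I"
  unfolding convex_closure_def
proof (rule cSup_eq_maximum)
  obtain \<mu> \<eta> where "\<forall>C\<subseteq>I. (\<Sum>i\<in>I. \<mu> i * chi C i) + \<eta> \<le> f C"
      and "(\<Sum>i\<in>I. \<mu> i * x i) + \<eta> = layer_sum f l (\<lambda>k. {i. v k \<le> x i}) m I"
    using greedy_affine_minorant[OF assms(1,2) x] by blast
  then show "layer_sum f l (\<lambda>k. {i. v k \<le> x i}) m I \<in> {(\<Sum>i\<in>I. \<mu> i * x i) + \<eta> | \<mu> \<eta>.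
      \<forall>C\<subseteq>I. (\<Sum>i\<in>I. \<mu> i * chi C i) + \<eta> \<le> f C}"
    by (blast intro: sym)
next
  have x': "\<forall>i\<in>I. (\<Sum>k<m. if i \<in> {i. v k \<le> x i} then l k else 0) = x i"
    using x by simp
  fix y assume "y \<in> {(\<Sum>i\<in>I. \<mu> i * x i) + \<eta> | \<mu> \<eta>. \<forall>C\<subseteq>I. (\<Sum>i\<in>I. \<mu> i * chi C i) + \<eta> \<le> f C}"
  then obtain \<mu> \<eta> where "y = (\<Sum>i\<in>I. \<mu> i * x i) + \<eta>"
      and "\<forall>C\<subseteq>I. (\<Sum>i\<in>I. \<mu> i * chi C i) + \<eta> \<le> f C"
    by blast
  with affine_minorant_le_layer_sum[OF assms(2-4) x'] show "y \<le> layer_sum f l (\<lambda>k. {i. v k \<le> x i}) m I"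
    by simp
qed

lemma binary_on_eq_image_chi: "binary_on I = chi ` Pow I"
proof (intro equalityI subsetI)
  fix c assume "c \<in> binary_on I"
  then have "c = chi {i\<in>I. c i = 1}" by (auto simp: binary_on_def chi_def fun_eq_iff)
  then show "c \<in> chi ` Pow I" by blast
qed (auto simp: binary_on_def chi_def)

lemma nu_chi:
  assumes mono: "\<forall>x\<in>unit_box. \<forall>y\<in>unit_box. (\<forall>i. x i \<le> y i) \<longrightarrow> Q x \<le> Q y"
    and "C \<subseteq> I"
  shows "nu Q I (chi C) = Q (chi C)"
  unfolding nu_def
proof (rule cInf_eq_minimum)
  have "chi C \<in> unit_box" by (auto simp: unit_box_def chi_def)
  then show "Q (chi C) \<in> {Q x |x. x \<in> unit_box \<and> (\<forall>i\<in>I. x i = chi C i)}" by blast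
  fix y assume "y \<in> {Q x |x. x \<in> unit_box \<and> (\<forall>i\<in>I. x i = chi C i)}"
  then obtain x where "y = Q x" "x \<in> unit_box" "\<forall>i\<in>I. x i = chi C i" by blast
  moreover from this have "\<forall>i. chi C i \<le> x i"
    using \<open>C \<subseteq> I\<close> by (auto simp: chi_def unit_box_def)
  ultimately show "Q (chi C) \<le> y" using mono \<open>chi C \<in> unit_box\<close> by blast
qed

lemma cut_violation_eq_convex_closure:
  assumes "\<forall>x\<in>unit_box. \<forall>y\<in>unit_box. (\<forall>i. x i \<le> y i) \<longrightarrow> Q x \<le> Q y"
  shows "cut_violation Q xhat I = convex_closure (\<lambda>C. Q (chi C)) I xhat"
  unfolding cut_violation_def convex_closure_def binary_on_eq_image_chi
  using nu_chi[OF assms] by (simp add: Pow_def)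

theorem proposition2:
  fixes Q Q' :: "('n::finite \<Rightarrow> real) \<Rightarrow> real" and xhat :: "'n \<Rightarrow> real"
  assumes ext: "\<forall>x\<in>binary_vecs. Q x = Q' x"
    and sub: "monotone_submodular (\<lambda>A. Q' (chi A))"
    and mono: "\<forall>x\<in>unit_box. \<forall>y\<in>unit_box. (\<forall>i. x i \<le> y i) \<longrightarrow> Q x \<le> Q y"
    and xhat: "xhat \<in> unit_box"
  shows "monotone_submodular (cut_violation Q xhat)"
proof -
  define f where "f A = Q (chi A)" for A
  have "f = (\<lambda>A. Q' (chi A))"
    using ext by (auto simp: f_def binary_vecs_def chi_def)
  with sub have f: "monotone_submodular f" by simp
  have "finite (range xhat)" "\<forall>y\<in>range xhat. 0 \<le> y"
    using xhat by (auto simp: unit_box_def)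
  then obtain m :: nat and l v where l: "\<forall>k<m. 0 \<le> l k \<and> v k \<in> range xhat"
      and sum_l: "(\<Sum>k<m. l k) = Max (insert 0 (range xhat))"
      and x: "\<forall>y\<in>range xhat. (\<Sum>k<m. if v k \<le> y then l k else 0) = y"
    using threshold_decomposition[of "range xhat"] by blast
  have "Max (insert 0 (range xhat)) \<le> 1"
    using xhat by (auto simp: unit_box_def intro: Max.boundedI)
  then have "convex_closure f I xhat = layer_sum f l (\<lambda>k. {i. v k \<le> xhat i}) m I" for I
  proof (intro convex_closure_eq_layer_sum)
    show "submodular f" using f by (simp add: monotone_submodular_iff)
  qed (use l sum_l x in auto)
  then have "cut_violation Q xhat = layer_sum f l (\<lambda>k. {i. v k \<le> xhat i}) m"
    unfolding cut_violation_eq_convex_closure[OF mono] f_def by blast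
  with f l show ?thesis by (simp add: monotone_submodular_layer_sum)
qed

end
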